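(* Let $U$ be a domain in $\mathbb{R}^2$ (or $\mathbb{C}$) and $X$ a real or complex subspace of the smooth functions on $U$ with the unique continuation property. Let $\varphi\in L^1_{loc}(U)$ and let $\varphi_1,\dots,\varphi_r\in X$ be pairwise distinct such that $\Gamma:=\bigcap_{1\le i\le r}\operatorname{supp}(\varphi-\varphi_i)$ has Lebesgue measure $0$. Set $M_i=U\setminus\operatorname{supp}(\varphi-\varphi_i)$. Then: (i) $\bigcup_{i}M_i=U\setminus\Gamma$; (ii) $\overline{M_i}\cap M_j=\emptyset$ for $i\ne j$; (iii) $M_i$ equals the interior of $\overline{M_i}$ for each $i$; (iv) $\Gamma=\bigcup_{1\le i<j\le r}\overline{M_i}\cap\overline{M_j}$; (v) if $\varphi$ is continuous, then $\Gamma\subseteq g^{-1}(0)$, where $g=\prod_{1\le i<j\le r}(\varphi_i-\varphi_j)$.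
   Context: $X$ has the unique continuation property if every $f\in X$ vanishing on a nonempty open subset of $U$ vanishes identically. Supports are taken in the distribution sense. Closures are taken in $U$. "$\varphi$ is continuous" means $\varphi$ agrees a.e. with a continuous function on $U$. *)

theory Defs
  imports "HOL-Analysis.Analysis"
begin

text \<open>C^k functions on U (as maps R^2 -> R^2 = C): C^0 = continuous;
  C^(k+1) = Frechet differentiable on U with both partial derivatives
  (in directions 1 and i) of class C^k.\<close>
primrec Ck :: "nat \<Rightarrow> complex set \<Rightarrow> (complex \<Rightarrow> complex) \<Rightarrow> bool" where
  "Ck 0 U f = continuous_on U f"
| "Ck (Suc k) U f =
     (\<exists>g1 g2. (\<forall>x\<in>U. (f has_derivative (\<lambda>h. Re h *\<^sub>R g1 x + Im h *\<^sub>R g2 x)) (at x))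
             \<and> Ck k U g1 \<and> Ck k U g2)"

definition smooth_on :: "complex set \<Rightarrow> (complex \<Rightarrow> complex) \<Rightarrow> bool" where
  "smooth_on U f \<longleftrightarrow> (\<forall>k. Ck k U f)"

definition domain :: "complex set \<Rightarrow> bool" where
  "domain U \<longleftrightarrow> open U \<and> connected U \<and> U \<noteq> {}"

text \<open>X is a real linear subspace (covers complex subspaces and real-valued ones).\<close>
definition real_fun_subspace :: "(complex \<Rightarrow> complex) set \<Rightarrow> bool" where
  "real_fun_subspace X \<longleftrightarrow> (\<lambda>x. 0) \<in> X \<and> (\<forall>f\<in>X. \<forall>g\<in>X. (\<lambda>x. f x + g x) \<in> X)
      \<and> (\<forall>c::real. \<forall>f\<in>X. (\<lambda>x. c *\<^sub>R f x) \<in> X)"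

definition unique_continuation :: "complex set \<Rightarrow> (complex \<Rightarrow> complex) set \<Rightarrow> bool" where
  "unique_continuation U X \<longleftrightarrow>
     (\<forall>f\<in>X. (\<exists>V. open V \<and> V \<noteq> {} \<and> V \<subseteq> U \<and> (\<forall>x\<in>V. f x = 0)) \<longrightarrow> (\<forall>x\<in>U. f x = 0))"

definition locally_integrable_on :: "complex set \<Rightarrow> (complex \<Rightarrow> complex) \<Rightarrow> bool" where
  "locally_integrable_on U f \<longleftrightarrow> (\<forall>K. compact K \<and> K \<subseteq> U \<longrightarrow> set_integrable lebesgue K f)"

text \<open>Support in the distribution sense (relative to U): complement in U of the
  largest open subset of U on which the function vanishes a.e.\<close>
definition dsupp :: "complex set \<Rightarrow> (complex \<Rightarrow> complex) \<Rightarrow> complex set" where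
  "dsupp U f = U - \<Union>{V. open V \<and> V \<subseteq> U \<and> (AE x in lebesgue. x \<in> V \<longrightarrow> f x = 0)}"

definition ae_continuous_on :: "complex set \<Rightarrow> (complex \<Rightarrow> complex) \<Rightarrow> bool" where
  "ae_continuous_on U f \<longleftrightarrow>
     (\<exists>c. continuous_on U c \<and> (AE x in lebesgue. x \<in> U \<longrightarrow> f x = c x))"

end

theory Submission
  imports Defs
begin

text \<open>On \<open>M i\<close> we have \<open>\<phi> = \<phi>\<^sub>i\<close> almost everywhere. If \<open>M i\<close> and \<open>M j\<close> met, \<open>\<phi>\<^sub>i\<close> and
  \<open>\<phi>\<^sub>j\<close> would agree a.e., hence everywhere, on a nonempty open set, and unique continuation
  would give \<open>\<phi>\<^sub>i = \<phi>\<^sub>j\<close>; so the \<open>M i\<close> are pairwise disjoint open sets whose union is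
  \<open>U - \<Gamma>\<close>. Since \<open>\<Gamma>\<close> is null, every open \<open>T \<subseteq> U\<close> missing all \<open>M j\<close> with \<open>j \<noteq> i\<close> satisfies
  \<open>\<phi> = \<phi>\<^sub>i\<close> a.e. on \<open>T\<close> and therefore lies in \<open>M i\<close>. This maximality yields (iii) and (iv)
  by point-set topology. For (v), a continuous representative of \<open>\<phi>\<close> equals \<open>\<phi>\<^sub>i\<close> on \<open>M i\<close>,
  hence on its closure in \<open>U\<close>, so \<open>\<phi>\<^sub>i = \<phi>\<^sub>j\<close> on \<open>closure (M i) \<inter> closure (M j) \<inter> U\<close>.\<close>

lemma open_AE_not_in_imp_empty:
  fixes S :: "'a::euclidean_space set"
  assumes "open S" "AE x in lebesgue. x \<notin> S"
  shows "S = {}"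
  using assms open_not_negligible negligible_iff_null_sets AE_iff_null_sets[of S lebesgue]
  by auto

lemma AE_eq_imp_eq_on_open:
  fixes f g :: "'a::euclidean_space \<Rightarrow> 'b::metric_space"
  assumes "open V" "continuous_on V f" "continuous_on V g"
    and "AE x in lebesgue. x \<in> V \<longrightarrow> f x = g x"
  shows "x \<in> V \<Longrightarrow> f x = g x"
proof -
  have "closedin (top_of_set V) {x \<in> V. f x = g x}"
    using closedin_continuous_maps_eq[where X="top_of_set V" and Y=euclidean and f=f and g=g] assms(2,3)
    by simp
  then have "openin (top_of_set V) (V - {x \<in> V. f x = g x})"
    by (intro openin_diff) auto
  moreover have "V - {x \<in> V. f x = g x} = {x \<in> V. f x \<noteq> g x}" by blast
  ultimately have "open {x \<in> V. f x \<noteq> g x}"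
    using assms(1) openin_open_trans by metis
  moreover have "AE x in lebesgue. x \<notin> {x \<in> V. f x \<noteq> g x}"
    using assms(4) by eventually_elim auto
  ultimately have "{x \<in> V. f x \<noteq> g x} = {}"
    by (rule open_AE_not_in_imp_empty)
  then show "x \<in> V \<Longrightarrow> f x = g x" by blast
qed

lemma eq_on_closure_Int:
  fixes f g :: "'a::topological_space \<Rightarrow> 'b::metric_space"
  assumes "continuous_on U f" "continuous_on U g" "A \<subseteq> U" "\<And>y. y \<in> A \<Longrightarrow> f y = g y"
    and "x \<in> closure A \<inter> U"
  shows "f x = g x"
proof (rule forall_in_closure_of_eq[where X="top_of_set U" and Y=euclidean])
  show "x \<in> top_of_set U closure_of A"
    using assms(3,5) by (simp add: closure_of_subtopology_open Int_commute)
qed (use assms in auto)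

lemma dsupp_subset: "dsupp U f \<subseteq> U"
  unfolding dsupp_def by auto

lemma Diff_dsupp_eq_Union:
  "U - dsupp U f = \<Union>{V. open V \<and> V \<subseteq> U \<and> (AE x in lebesgue. x \<in> V \<longrightarrow> f x = 0)}"
  unfolding dsupp_def by auto

lemma open_Diff_dsupp: "open (U - dsupp U f)"
  unfolding Diff_dsupp_eq_Union by auto

lemma subset_Diff_dsupp:
  assumes "open V" "V \<subseteq> U" "AE x in lebesgue. x \<in> V \<longrightarrow> f x = 0"
  shows "V \<subseteq> U - dsupp U f"
  using assms unfolding Diff_dsupp_eq_Union by blast

text \<open>Lindelof's theorem reduces the union defining the complement of the support to a
  countable one, over which almost-everywhere statements can be collected.\<close>
lemma AE_zero_on_Diff_dsupp: "AE x in lebesgue. x \<in> U - dsupp U f \<longrightarrow> f x = 0"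
proof -
  let ?F = "{V. open V \<and> V \<subseteq> U \<and> (AE x in lebesgue. x \<in> V \<longrightarrow> f x = 0)}"
  obtain F where F: "F \<subseteq> ?F" "countable F" "\<Union>F = \<Union>?F"
    using Lindelof[of ?F] by blast
  have "AE x in lebesgue. \<forall>V\<in>F. x \<in> V \<longrightarrow> f x = 0"
    using F by (subst AE_ball_countable) auto
  then show ?thesis
    unfolding Diff_dsupp_eq_Union F(3)[symmetric] by eventually_elim auto
qed

lemma subset_Diff_dsupp_null:
  assumes "open T" "T \<subseteq> U" "N \<in> null_sets lebesgue" "T - N \<subseteq> U - dsupp U f"
  shows "T \<subseteq> U - dsupp U f"
proof (rule subset_Diff_dsupp[OF assms(1,2)])
  show "AE x in lebesgue. x \<in> T \<longrightarrow> f x = 0"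
    using AE_zero_on_Diff_dsupp[of U f] AE_not_in[OF assms(3)]
    by eventually_elim (use assms(4) in auto)
qed

lemma AE_eq_on_Diff_dsupp:
  "AE x in lebesgue. x \<in> U - dsupp U (\<lambda>x. f x - g x) \<longrightarrow> f x = g x"
  using AE_zero_on_Diff_dsupp[of U "\<lambda>x. f x - g x"] by eventually_elim auto

lemma continuous_eq_on_Diff_dsupp:
  assumes "continuous_on U c" "AE x in lebesgue. x \<in> U \<longrightarrow> \<phi> x = c x" "continuous_on U f"
    and "y \<in> U - dsupp U (\<lambda>x. \<phi> x - f x)"
  shows "c y = f y"
proof (rule AE_eq_imp_eq_on_open[OF open_Diff_dsupp _ _ _ assms(4)])
  show "continuous_on (U - dsupp U (\<lambda>x. \<phi> x - f x)) c"
    "continuous_on (U - dsupp U (\<lambda>x. \<phi> x - f x)) f"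
    using assms(1,3) by (auto intro: continuous_on_subset)
  show "AE x in lebesgue. x \<in> U - dsupp U (\<lambda>x. \<phi> x - f x) \<longrightarrow> c x = f x"
    using assms(2) AE_eq_on_Diff_dsupp[of U \<phi> f] by eventually_elim auto
qed

lemma smooth_on_imp_continuous_on: "smooth_on U f \<Longrightarrow> continuous_on U f"
  unfolding smooth_on_def by (metis Ck.simps(1))

lemma real_fun_subspace_diff:
  assumes "real_fun_subspace X" "f \<in> X" "g \<in> X"
  shows "(\<lambda>x. f x - g x) \<in> X"
proof -
  have add: "\<And>f g. f \<in> X \<Longrightarrow> g \<in> X \<Longrightarrow> (\<lambda>x. f x + g x) \<in> X"
    and scale: "\<And>c f. f \<in> X \<Longrightarrow> (\<lambda>x. c *\<^sub>R f x) \<in> X"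
    using assms(1) unfolding real_fun_subspace_def by blast+
  have "(\<lambda>x. f x + (-1::real) *\<^sub>R g x) \<in> X"
    by (intro add scale assms(2,3))
  then show ?thesis by simp
qed

lemma unique_continuation_eq:
  assumes "unique_continuation U X" "real_fun_subspace X" "f \<in> X" "g \<in> X"
    and "open V" "V \<noteq> {}" "V \<subseteq> U" "\<And>x. x \<in> V \<Longrightarrow> f x = g x" "x \<in> U"
  shows "f x = g x"
  using assms real_fun_subspace_diff[OF assms(2-4)]
  unfolding unique_continuation_def by (metis (no_types, lifting) right_minus_eq)

lemma Diff_dsupp_Int_Diff_dsupp_eq_empty:
  assumes "unique_continuation U X" "real_fun_subspace X" "f \<in> X" "g \<in> X"
    and "continuous_on U f" "continuous_on U g" "x \<in> U" "f x \<noteq> g x"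
  shows "(U - dsupp U (\<lambda>x. \<phi> x - f x)) \<inter> (U - dsupp U (\<lambda>x. \<phi> x - g x)) = {}"
    (is "?V = {}")
proof (rule ccontr)
  assume "?V \<noteq> {}"
  have "open ?V" by (intro open_Int open_Diff_dsupp)
  moreover have "continuous_on ?V f" "continuous_on ?V g"
    using assms(5,6) by (auto intro: continuous_on_subset)
  moreover have "AE y in lebesgue. y \<in> ?V \<longrightarrow> f y = g y"
    using AE_eq_on_Diff_dsupp[of U \<phi> f] AE_eq_on_Diff_dsupp[of U \<phi> g] by eventually_elim auto
  ultimately have "y \<in> ?V \<Longrightarrow> f y = g y" for y
    by (rule AE_eq_imp_eq_on_open)
  then have "f x = g x"
    using unique_continuation_eq[OF assms(1-4) \<open>open ?V\<close> \<open>?V \<noteq> {}\<close> _ _ assms(7)] by blast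
  with assms(8) show False ..
qed

lemma interior_closure_Int_eq_if_maximal:
  fixes M :: "'i \<Rightarrow> 'a::topological_space set"
  assumes "i \<in> I" "\<And>j. j \<in> I \<Longrightarrow> open (M j)" "M i \<subseteq> U"
    and "\<And>j. j \<in> I \<Longrightarrow> j \<noteq> i \<Longrightarrow> M i \<inter> M j = {}"
    and maximal: "\<And>T. open T \<Longrightarrow> T \<subseteq> U \<Longrightarrow> (\<And>j. j \<in> I \<Longrightarrow> j \<noteq> i \<Longrightarrow> T \<inter> M j = {})
      \<Longrightarrow> T \<subseteq> M i"
  shows "M i = interior (closure (M i) \<inter> U)"
proof
  show "interior (closure (M i) \<inter> U) \<subseteq> M i"
  proof (rule maximal)
    fix j assume "j \<in> I" "j \<noteq> i"
    then have "closure (M i) \<inter> M j = {}"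
      using assms(2,4) open_Int_closure_eq_empty by (metis inf_commute)
    then show "interior (closure (M i) \<inter> U) \<inter> M j = {}"
      using interior_subset by blast
  qed (use interior_subset in auto)
  show "M i \<subseteq> interior (closure (M i) \<inter> U)"
    using assms(1-3) closure_subset by (intro interior_maximal) auto
qed

lemma Diff_Union_eq_Union_closure_Int_if_maximal:
  fixes M :: "'i::linorder \<Rightarrow> 'a::topological_space set"
  assumes "finite I" "I \<noteq> {}" "open U" "\<And>i. i \<in> I \<Longrightarrow> open (M i)"
    and disjoint: "\<And>i j. i \<in> I \<Longrightarrow> j \<in> I \<Longrightarrow> i \<noteq> j \<Longrightarrow> M i \<inter> M j = {}"
    and maximal: "\<And>i T. i \<in> I \<Longrightarrow> open T \<Longrightarrow> T \<subseteq> U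
      \<Longrightarrow> (\<And>j. j \<in> I \<Longrightarrow> j \<noteq> i \<Longrightarrow> T \<inter> M j = {}) \<Longrightarrow> T \<subseteq> M i"
  shows "U - \<Union>(M ` I) = (\<Union>(i, j)\<in>{(i, j). i \<in> I \<and> j \<in> I \<and> i < j}.
           (closure (M i) \<inter> U) \<inter> (closure (M j) \<inter> U))" (is "_ = ?B")
proof
  have closure_Int: "closure (M i) \<inter> M j = {}" if "i \<in> I" "j \<in> I" "i \<noteq> j" for i j
    using that assms(4) disjoint open_Int_closure_eq_empty by (metis inf_commute)
  show "?B \<subseteq> U - \<Union>(M ` I)"
  proof
    fix x assume "x \<in> ?B"
    then obtain i j where "i \<in> I" "j \<in> I" "i \<noteq> j" "x \<in> closure (M i)" "x \<in> closure (M j)" "x \<in> U"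
      by auto
    then show "x \<in> U - \<Union>(M ` I)"
      using closure_Int by (metis Diff_iff UN_E disjoint_iff)
  qed
  show "U - \<Union>(M ` I) \<subseteq> ?B"
  proof
    fix x assume x: "x \<in> U - \<Union>(M ` I)"
    show "x \<in> ?B"
    proof (rule ccontr)
      assume "x \<notin> ?B"
      then have unique: "i = j" if "i \<in> I" "j \<in> I" "x \<in> closure (M i)" "x \<in> closure (M j)" for i j
        using that x by (cases i j rule: linorder_cases) auto
      obtain i where i: "i \<in> I" "\<And>j. j \<in> I \<Longrightarrow> x \<in> closure (M j) \<Longrightarrow> j = i"
        using unique assms(2) by blast
      let ?T = "U - (\<Union>j\<in>I - {i}. closure (M j))"
      have "?T \<subseteq> M i"
        using assms(1,3) closure_subset by (intro maximal i(1) open_Diff closed_UN) auto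
      moreover have "x \<in> ?T" using x i(2) by blast
      ultimately show False using x i(1) by blast
    qed
  qed
qed

lemma Union_closure_Int_subset_prod_eq_0:
  fixes f :: "'i::linorder \<Rightarrow> 'a::topological_space \<Rightarrow> 'b::{metric_space, comm_ring_1}"
  assumes "finite I" "continuous_on U c" "\<And>i. i \<in> I \<Longrightarrow> continuous_on U (f i)"
    and "\<And>i. i \<in> I \<Longrightarrow> M i \<subseteq> U" "\<And>i y. i \<in> I \<Longrightarrow> y \<in> M i \<Longrightarrow> c y = f i y"
  shows "(\<Union>(i, j)\<in>{(i, j). i \<in> I \<and> j \<in> I \<and> i < j}. (closure (M i) \<inter> U) \<inter> (closure (M j) \<inter> U))
    \<subseteq> {x. (\<Prod>(i, j)\<in>{(i, j). i \<in> I \<and> j \<in> I \<and> i < j}. f i x - f j x) = 0}"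
proof
  fix x assume "x \<in> (\<Union>(i, j)\<in>{(i, j). i \<in> I \<and> j \<in> I \<and> i < j}. (closure (M i) \<inter> U) \<inter> (closure (M j) \<inter> U))"
  then obtain i j where ij: "i \<in> I" "j \<in> I" "i < j" "x \<in> closure (M i) \<inter> U" "x \<in> closure (M j) \<inter> U"
    by auto
  have "c x = f k x" if "k \<in> I" "x \<in> closure (M k) \<inter> U" for k
    using eq_on_closure_Int[of U c "f k" "M k"] assms(2-5) that by blast
  then have "f i x - f j x = 0" using ij by (metis right_minus_eq)
  moreover have "finite {(i, j). i \<in> I \<and> j \<in> I \<and> i < j}"
    by (rule finite_subset[of _ "I \<times> I"]) (use assms(1) in auto)
  ultimately have "(\<Prod>(i, j)\<in>{(i, j). i \<in> I \<and> j \<in> I \<and> i < j}. f i x - f j x) = 0"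
    using ij by (intro prod_zero) auto
  then show "x \<in> {x. (\<Prod>(i, j)\<in>{(i, j). i \<in> I \<and> j \<in> I \<and> i < j}. f i x - f j x) = 0}" by simp
qed

theorem lemma1:
  fixes U :: "complex set" and X :: "(complex \<Rightarrow> complex) set"
    and \<phi> :: "complex \<Rightarrow> complex" and \<phi>s :: "nat \<Rightarrow> complex \<Rightarrow> complex" and r :: nat
  assumes "domain U"
    and "real_fun_subspace X" and "\<forall>f\<in>X. smooth_on U f"
    and "unique_continuation U X"
    and "locally_integrable_on U \<phi>"
    and "\<forall>i\<in>{1..r}. \<phi>s i \<in> X"
    and "\<forall>i\<in>{1..r}. \<forall>j\<in>{1..r}. i \<noteq> j \<longrightarrow> (\<exists>x\<in>U. \<phi>s i x \<noteq> \<phi>s j x)"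
    and "U \<inter> (\<Inter>i\<in>{1..r}. dsupp U (\<lambda>x. \<phi> x - \<phi>s i x)) \<in> null_sets lebesgue"
  defines "\<Gamma> \<equiv> U \<inter> (\<Inter>i\<in>{1..r}. dsupp U (\<lambda>x. \<phi> x - \<phi>s i x))"
    and "M \<equiv> (\<lambda>i. U - dsupp U (\<lambda>x. \<phi> x - \<phi>s i x))"
  shows "((\<Union>i\<in>{1..r}. M i) = U - \<Gamma>)
    \<and> (\<forall>i\<in>{1..r}. \<forall>j\<in>{1..r}. i \<noteq> j \<longrightarrow> (closure (M i) \<inter> U) \<inter> M j = {})
    \<and> (\<forall>i\<in>{1..r}. M i = interior (closure (M i) \<inter> U))
    \<and> (\<Gamma> = (\<Union>(i, j)\<in>{(i, j). 1 \<le> i \<and> i < j \<and> j \<le> r}.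
                 (closure (M i) \<inter> U) \<inter> (closure (M j) \<inter> U)))
    \<and> (ae_continuous_on U \<phi> \<longrightarrow>
           \<Gamma> \<subseteq> {x. (\<Prod>(i, j)\<in>{(i, j). 1 \<le> i \<and> i < j \<and> j \<le> r}. \<phi>s i x - \<phi>s j x) = 0})"
proof -
  let ?I = "{1..r}"
  let ?P = "{(i, j). i \<in> ?I \<and> j \<in> ?I \<and> i < j}"
  have U: "open U" "U \<noteq> {}" using assms(1) unfolding domain_def by auto
  have cont: "continuous_on U (\<phi>s i)" if "i \<in> ?I" for i
    using assms(3,6) that smooth_on_imp_continuous_on by blast
  have M_open: "open (M i)" and M_subset: "M i \<subseteq> U" for i
    unfolding M_def by (auto intro: open_Diff_dsupp)
  have disjoint: "M i \<inter> M j = {}" if "i \<in> ?I" "j \<in> ?I" "i \<noteq> j" for i j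
    using assms(7) that Diff_dsupp_Int_Diff_dsupp_eq_empty[OF assms(4,2)] assms(6) cont
    unfolding M_def by metis
  have \<Gamma>_eq: "\<Gamma> = U - (\<Union>i\<in>?I. M i)"
    unfolding \<Gamma>_def M_def using dsupp_subset by blast
  have maximal: "T \<subseteq> M i" if "i \<in> ?I" "open T" "T \<subseteq> U"
    "\<And>j. j \<in> ?I \<Longrightarrow> j \<noteq> i \<Longrightarrow> T \<inter> M j = {}" for i T
  proof -
    have "T - \<Gamma> \<subseteq> M i" using that \<Gamma>_eq by blast
    then show ?thesis
      using subset_Diff_dsupp_null[OF that(2,3) assms(8)] unfolding M_def \<Gamma>_def by blast
  qed
  have "?I \<noteq> {}"
    using assms(8) U open_not_negligible negligible_iff_null_sets by force
  then have boundary: "\<Gamma> = (\<Union>(i, j)\<in>?P. (closure (M i) \<inter> U) \<inter> (closure (M j) \<inter> U))"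
    unfolding \<Gamma>_eq using U disjoint maximal M_open
    by (intro Diff_Union_eq_Union_closure_Int_if_maximal) auto
  have pairs: "{(i, j). 1 \<le> i \<and> i < j \<and> j \<le> r} = ?P" by auto
  show ?thesis
    unfolding pairs
  proof (intro conjI ballI impI)
    show "(\<Union>i\<in>?I. M i) = U - \<Gamma>" using \<Gamma>_eq M_subset by blast
    show "closure (M i) \<inter> U \<inter> M j = {}" if "i \<in> ?I" "j \<in> ?I" "i \<noteq> j" for i j
      using disjoint[OF that] M_open open_Int_closure_eq_empty by blast
    show "M i = interior (closure (M i) \<inter> U)" if "i \<in> ?I" for i
      using that M_open M_subset disjoint maximal
      by (intro interior_closure_Int_eq_if_maximal[where I="?I"]) auto
    show "\<Gamma> = (\<Union>(i, j)\<in>?P. (closure (M i) \<inter> U) \<inter> (closure (M j) \<inter> U))" by (fact boundary)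
    assume "ae_continuous_on U \<phi>"
    then obtain c where c: "continuous_on U c" "AE x in lebesgue. x \<in> U \<longrightarrow> \<phi> x = c x"
      unfolding ae_continuous_on_def by blast
    have "c y = \<phi>s i y" if "i \<in> ?I" "y \<in> M i" for i y
      using continuous_eq_on_Diff_dsupp[OF c cont] that unfolding M_def by blast
    then show "\<Gamma> \<subseteq> {x. (\<Prod>(i, j)\<in>?P. \<phi>s i x - \<phi>s j x) = 0}"
      unfolding boundary using c(1) cont M_subset
      by (intro Union_closure_Int_subset_prod_eq_0) auto
  qed
qed

end
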